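(* Let $p,n\in\mathbb N$ with $p\ge n\ge 10$, and write $p=k(n-1)+r$ with $k\in\mathbb N$ and $r\in\{0,1,\ldots,n-2\}$. Let $T_n$ be a tree on $n$ vertices with $\Delta(T_n)=n-4$, and let $G\in\mathrm{Ex}(p;T_n)$. If $G$ is connected and $\Delta(G)\le n-4$, then $$p\le \min\Big\{\frac{3(n-1+r)+((-1)^n+(-1)^r)/2}2,\ \frac{r(n-1-r)}2\Big\},$$ and in particular $p\le 2n-7$.
   Context: All graphs are finite simple graphs; $\Delta(G)$ is the maximum degree of $G$. For a graph $L$, $\mathrm{ex}(p;L)$ is the maximum number of edges in a graph on $p$ vertices containing no subgraph isomorphic to $L$, and $\mathrm{Ex}(p;L)$ is the set of graphs on $p$ vertices containing no copy of $L$ and having exactly $\mathrm{ex}(p;L)$ edges. *)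

theory Defs
  imports Complex_Main
begin

definition simple_graph :: "'a set \<Rightarrow> 'a set set \<Rightarrow> bool" where
  "simple_graph V E \<longleftrightarrow> finite V \<and> (\<forall>e\<in>E. e \<subseteq> V \<and> card e = 2)"

definition degree :: "'a set set \<Rightarrow> 'a \<Rightarrow> nat" where
  "degree E v = card {e\<in>E. v \<in> e}"

definition max_degree :: "'a set \<Rightarrow> 'a set set \<Rightarrow> nat" where
  "max_degree V E = (if V = {} then 0 else Max (degree E ` V))"

definition adj :: "'a set set \<Rightarrow> 'a \<Rightarrow> 'a \<Rightarrow> bool" where
  "adj E u v \<longleftrightarrow> {u, v} \<in> E"

definition connected_graph :: "'a set \<Rightarrow> 'a set set \<Rightarrow> bool" where
  "connected_graph V E \<longleftrightarrow> V \<noteq> {} \<and> (\<forall>u\<in>V. \<forall>v\<in>V. (adj E)\<^sup>*\<^sup>* u v)"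

definition is_cycle :: "'a set set \<Rightarrow> 'a list \<Rightarrow> bool" where
  "is_cycle E xs \<longleftrightarrow> length xs \<ge> 3 \<and> distinct xs \<and>
     (\<forall>i. Suc i < length xs \<longrightarrow> adj E (xs ! i) (xs ! Suc i)) \<and>
     adj E (last xs) (hd xs)"

definition acyclic_graph :: "'a set set \<Rightarrow> bool" where
  "acyclic_graph E \<longleftrightarrow> \<not> (\<exists>xs. is_cycle E xs)"

definition is_tree :: "'a set \<Rightarrow> 'a set set \<Rightarrow> bool" where
  "is_tree V E \<longleftrightarrow> simple_graph V E \<and> connected_graph V E \<and> acyclic_graph E"

definition contains_copy :: "'a set \<Rightarrow> 'a set set \<Rightarrow> 'b set \<Rightarrow> 'b set set \<Rightarrow> bool" where
  "contains_copy V E W F \<longleftrightarrow>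
     (\<exists>f. inj_on f W \<and> f ` W \<subseteq> V \<and> (\<forall>e\<in>F. f ` e \<in> E))"

text \<open>ex(p;L): maximum number of edges of an L-free graph on p vertices
  (vertex set taken as {0..<p}; the value is isomorphism invariant).\<close>
definition ex_num :: "nat \<Rightarrow> 'b set \<Rightarrow> 'b set set \<Rightarrow> nat" where
  "ex_num p W F = Max {card E | E. simple_graph {0..<p} E \<and> \<not> contains_copy {0..<p} E W F}"

definition in_Ex :: "nat \<Rightarrow> 'b set \<Rightarrow> 'b set set \<Rightarrow> 'a set \<Rightarrow> 'a set set \<Rightarrow> bool" where
  "in_Ex p W F V E \<longleftrightarrow> simple_graph V E \<and> card V = p \<and> \<not> contains_copy V E W F
     \<and> card E = ex_num p W F"

end

theory Submission
  imports Defs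
begin

text \<open>Since \<open>\<Delta>(G) \<le> n - 4\<close>, counting degrees gives \<open>2 ex(p;T\<^sub>n) \<le> p(n - 4)\<close>. On the other hand
  \<open>ex(p;T\<^sub>n)\<close> is bounded below by two \<open>T\<^sub>n\<close>-free constructions: \<open>k K\<^sub>n\<^sub>-\<^sub>1 \<union> K\<^sub>r\<close>, whose components
  are too small to hold \<open>T\<^sub>n\<close>, and \<open>(k - 1) K\<^sub>n\<^sub>-\<^sub>1 \<union> H\<close> with \<open>H\<close> an almost \<open>(n - 5)\<close>-regular graph
  on \<open>n - 1 + r\<close> vertices, which has too small a maximum degree. The second bound forces \<open>k = 1\<close>,
  and the first then reads \<open>2p \<le> r(n - 1 - r)\<close>, which leaves no room for \<open>p > 2n - 7\<close>.\<close>

lemma simple_graph_finite_edges: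
  assumes "simple_graph V E"
  shows "finite E"
proof -
  have "E \<subseteq> Pow V" using assms unfolding simple_graph_def by auto
  then show ?thesis using assms unfolding simple_graph_def by (meson finite_Pow_iff finite_subset)
qed

lemma sum_degree_eq_twice_card:
  assumes "simple_graph V E"
  shows "(\<Sum>v\<in>V. degree E v) = 2 * card E"
proof -
  have fV: "finite V" and edge: "\<And>e. e \<in> E \<Longrightarrow> e \<subseteq> V \<and> card e = 2"
    using assms unfolding simple_graph_def by auto
  have "(\<Sum>v\<in>V. degree E v) = (\<Sum>v\<in>V. \<Sum>e\<in>E. if v \<in> e then 1 else 0)"
    unfolding degree_def using simple_graph_finite_edges[OF assms] by (simp add: sum.inter_filter[symmetric])
  also have "\<dots> = (\<Sum>e\<in>E. \<Sum>v\<in>V. if v \<in> e then 1 else 0)"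
    by (rule sum.swap)
  also have "\<dots> = (\<Sum>e\<in>E. 2::nat)"
  proof (rule sum.cong[OF refl])
    fix e assume "e \<in> E"
    then have "{v\<in>V. v \<in> e} = e" "card e = 2" using edge by auto
    then show "(\<Sum>v\<in>V. if v \<in> e then 1 else 0) = (2::nat)"
      using fV by (simp add: sum.inter_filter[symmetric])
  qed
  finally show ?thesis by simp
qed

lemma twice_card_le_max_degree:
  assumes "simple_graph V E"
  shows "2 * card E \<le> card V * max_degree V E"
proof -
  have fV: "finite V" using assms unfolding simple_graph_def by auto
  have "2 * card E = (\<Sum>v\<in>V. degree E v)"
    using sum_degree_eq_twice_card[OF assms] by simp
  also have "\<dots> \<le> (\<Sum>v\<in>V. max_degree V E)"
    using fV by (intro sum_mono) (auto simp: max_degree_def)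
  finally show ?thesis by (simp add: mult.commute)
qed

lemma card_le_ex_num:
  assumes "simple_graph {0..<p} E" "\<not> contains_copy {0..<p} E W F"
  shows "card E \<le> ex_num p W F"
proof -
  have "{card E | E. simple_graph {0..<p} E \<and> \<not> contains_copy {0..<p} E W F}
        \<subseteq> card ` Pow (Pow {0..<p})"
    unfolding simple_graph_def by auto
  then have "finite {card E | E. simple_graph {0..<p} E \<and> \<not> contains_copy {0..<p} E W F}"
    by (rule finite_subset) simp
  then show ?thesis unfolding ex_num_def using assms by (auto intro!: Max_ge)
qed

lemma degree_le_degree_copy:
  assumes "simple_graph W F" "finite E" "inj_on f W" "\<forall>e\<in>F. f ` e \<in> E" "w \<in> W"
  shows "degree F w \<le> degree E (f w)"
  unfolding degree_def
proof (rule card_inj_on_le)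
  show "inj_on ((`) f) {e \<in> F. w \<in> e}"
  proof (rule inj_onI)
    fix x y assume "x \<in> {e \<in> F. w \<in> e}" "y \<in> {e \<in> F. w \<in> e}" "f ` x = f ` y"
    moreover from calculation have "x \<subseteq> W" "y \<subseteq> W"
      using assms(1) unfolding simple_graph_def by auto
    ultimately show "x = y" using inj_on_image_eq_iff[OF assms(3)] by simp
  qed
  show "(`) f ` {e \<in> F. w \<in> e} \<subseteq> {e \<in> E. f w \<in> e}" using assms(4) by auto
qed (use assms(2) in simp)

lemma label_constant_on_copy:
  assumes "connected_graph W F" "\<forall>e\<in>F. f ` e \<in> E"
    and "\<And>e x y. e \<in> E \<Longrightarrow> x \<in> e \<Longrightarrow> y \<in> e \<Longrightarrow> b x = b y"
    and "w0 \<in> W" "w \<in> W"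
  shows "b (f w) = b (f w0)"
proof -
  have "(adj F)\<^sup>*\<^sup>* w0 w" using assms(1,4,5) unfolding connected_graph_def by auto
  then show ?thesis
  proof (induction rule: rtranclp_induct)
    case (step y z)
    then have "{y, z} \<in> F" unfolding adj_def by simp
    then have "f ` {y, z} \<in> E" using assms(2) by blast
    then have "{f y, f z} \<in> E" by simp
    then have "b (f y) = b (f z)" by (rule assms(3)) simp_all
    then show ?case using step.IH by simp
  qed simp
qed

text \<open>A copy of a connected graph stays inside one label class, and the image of a vertex of
  maximum degree needs at least that degree.\<close>
lemma no_copy_if_small_class_or_low_degree:
  assumes "simple_graph W F" "connected_graph W F" "finite V" "finite E"
    and "\<And>e x y. e \<in> E \<Longrightarrow> x \<in> e \<Longrightarrow> y \<in> e \<Longrightarrow> b x = b y"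
    and "\<And>v. v \<in> V \<Longrightarrow> card {u\<in>V. b u = b v} < card W \<or> degree E v < max_degree W F"
  shows "\<not> contains_copy V E W F"
proof
  assume "contains_copy V E W F"
  then obtain f where inj: "inj_on f W" and img: "f ` W \<subseteq> V" and edges: "\<forall>e\<in>F. f ` e \<in> E"
    unfolding contains_copy_def by auto
  have fW: "finite W" and Wne: "W \<noteq> {}"
    using assms(1,2) unfolding simple_graph_def connected_graph_def by auto
  have "max_degree W F \<in> degree F ` W"
    using fW Wne unfolding max_degree_def by auto
  then obtain w0 where w0: "w0 \<in> W" "degree F w0 = max_degree W F" by auto
  have "max_degree W F \<le> degree E (f w0)"
    using degree_le_degree_copy[OF assms(1,4) inj edges w0(1)] w0(2) by simp
  then have small: "card {u\<in>V. b u = b (f w0)} < card W"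
    using assms(6) img w0(1) by fastforce
  have "f ` W \<subseteq> {u\<in>V. b u = b (f w0)}"
    using img label_constant_on_copy[OF assms(2) edges assms(5) w0(1)] by auto
  then have "card (f ` W) \<le> card {u\<in>V. b u = b (f w0)}"
    using assms(3) by (intro card_mono) auto
  then show False using small card_image[OF inj] by simp
qed

lemma twice_ex_num_le:
  assumes "in_Ex p W F V E" "max_degree V E \<le> D"
  shows "2 * ex_num p W F \<le> p * D"
proof -
  have "2 * ex_num p W F \<le> p * max_degree V E"
    using twice_card_le_max_degree assms(1) unfolding in_Ex_def by metis
  then show ?thesis using assms(2) mult_le_mono2 order_trans by blast
qed

section \<open>Graphs on initial segments of the naturals\<close>

definition rel_graph :: "nat \<Rightarrow> (nat \<Rightarrow> nat \<Rightarrow> bool) \<Rightarrow> nat set set" where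
  "rel_graph p R = {{i, j} | i j. i < p \<and> j < p \<and> i \<noteq> j \<and> R i j}"

definition nbrs :: "nat \<Rightarrow> (nat \<Rightarrow> nat \<Rightarrow> bool) \<Rightarrow> nat \<Rightarrow> nat set" where
  "nbrs p R v = {j. j < p \<and> j \<noteq> v \<and> R v j}"

lemma simple_graph_rel_graph: "simple_graph {0..<p} (rel_graph p R)"
  unfolding simple_graph_def rel_graph_def by auto

lemma degree_rel_graph:
  assumes "symp R" "v < p"
  shows "degree (rel_graph p R) v = card (nbrs p R v)"
proof -
  have "bij_betw (\<lambda>j. {v, j}) (nbrs p R v) {e \<in> rel_graph p R. v \<in> e}"
  proof (rule bij_betwI')
    fix x y assume "x \<in> nbrs p R v" "y \<in> nbrs p R v"
    then show "({v, x} = {v, y}) = (x = y)" by (metis doubleton_eq_iff)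
  next
    fix x assume "x \<in> nbrs p R v"
    then show "{v, x} \<in> {e \<in> rel_graph p R. v \<in> e}"
      using assms(2) unfolding nbrs_def rel_graph_def by blast
  next
    fix e assume "e \<in> {e \<in> rel_graph p R. v \<in> e}"
    then obtain i j where "e = {i, j}" "i < p" "j < p" "i \<noteq> j" "R i j" "v \<in> e"
      unfolding rel_graph_def by blast
    then show "\<exists>x\<in>nbrs p R v. e = {v, x}"
      using assms(1) unfolding nbrs_def by (auto dest: sympD)
  qed
  then show ?thesis unfolding degree_def by (simp add: bij_betw_same_card)
qed

lemma twice_card_rel_graph:
  assumes "symp R"
  shows "2 * card (rel_graph p R) = (\<Sum>v<p. card (nbrs p R v))"
  using sum_degree_eq_twice_card[OF simple_graph_rel_graph, of p R] degree_rel_graph[OF assms]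
  by (simp add: atLeast0LessThan)

definition sum_rel ::
    "nat \<Rightarrow> (nat \<Rightarrow> nat \<Rightarrow> bool) \<Rightarrow> (nat \<Rightarrow> nat \<Rightarrow> bool) \<Rightarrow> nat \<Rightarrow> nat \<Rightarrow> bool" where
  "sum_rel a R S i j \<longleftrightarrow> (i < a \<and> j < a \<and> R i j) \<or> (a \<le> i \<and> a \<le> j \<and> S (i - a) (j - a))"

lemma symp_sum_rel: "symp R \<Longrightarrow> symp S \<Longrightarrow> symp (sum_rel a R S)"
  unfolding symp_def sum_rel_def by blast

lemma nbrs_sum_rel_low: "v < a \<Longrightarrow> nbrs (a + b) (sum_rel a R S) v = nbrs a R v"
  unfolding nbrs_def sum_rel_def by auto

lemma nbrs_sum_rel_high:
  "nbrs (a + b) (sum_rel a R S) (a + v) = (\<lambda>j. a + j) ` nbrs b S v"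
proof -
  have "j \<in> (\<lambda>j. a + j) ` nbrs b S v"
    if "j < a + b" "j \<noteq> a + v" "a \<le> j" "S v (j - a)" for j
    using that by (auto simp: nbrs_def image_iff intro!: exI[of _ "j - a"])
  then show ?thesis unfolding nbrs_def sum_rel_def by auto
qed

lemma sum_lessThan_add_nat:
  fixes a b :: nat and g :: "nat \<Rightarrow> 'a::comm_monoid_add"
  shows "(\<Sum>v<a + b. g v) = (\<Sum>v<a. g v) + (\<Sum>v<b. g (a + v))"
  by (induction b) (auto simp: add.assoc)

lemma sum_card_nbrs_sum_rel:
  "(\<Sum>v<a + b. card (nbrs (a + b) (sum_rel a R S) v))
     = (\<Sum>v<a. card (nbrs a R v)) + (\<Sum>v<b. card (nbrs b S v))"
proof -
  have "(\<Sum>v<a + b. card (nbrs (a + b) (sum_rel a R S) v))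
      = (\<Sum>v<a. card (nbrs (a + b) (sum_rel a R S) v))
        + (\<Sum>v<b. card (nbrs (a + b) (sum_rel a R S) (a + v)))"
    by (rule sum_lessThan_add_nat)
  also have "\<dots> = (\<Sum>v<a. card (nbrs a R v)) + (\<Sum>v<b. card (nbrs b S v))"
    by (simp add: nbrs_sum_rel_low nbrs_sum_rel_high card_image)
  finally show ?thesis .
qed

definition block_rel :: "nat \<Rightarrow> nat \<Rightarrow> nat \<Rightarrow> bool" where
  "block_rel c i j \<longleftrightarrow> i div c = j div c"

lemma symp_block_rel: "symp (block_rel c)"
  unfolding symp_def block_rel_def by simp

lemma block_eq_atLeastLessThan:
  fixes c v :: nat
  assumes "0 < c"
  shows "{j. j div c = v div c} = {v div c * c..<v div c * c + c}"
proof -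
  have "j div c = v div c \<longleftrightarrow> v div c * c \<le> j \<and> j < v div c * c + c" for j
  proof
    assume "j div c = v div c"
    then show "v div c * c \<le> j \<and> j < v div c * c + c"
      using div_times_less_eq_dividend[of j c] dividend_less_div_times[OF assms, of j] by simp
  next
    assume "v div c * c \<le> j \<and> j < v div c * c + c"
    then show "j div c = v div c" by (intro div_nat_eqI) (auto simp: mult.commute)
  qed
  then show ?thesis unfolding set_eq_iff mem_Collect_eq atLeastLessThan_iff by blast
qed

lemma card_nbrs_block_rel:
  assumes "0 < c" "v < q * c"
  shows "card (nbrs (q * c) (block_rel c) v) = c - 1"
proof -
  have "Suc (v div c) \<le> q" using less_mult_imp_div_less[OF assms(2)] by simp
  then have "v div c * c + c \<le> q * c" using mult_le_mono1[of "Suc (v div c)" q c] by simp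
  then have "{j. j div c = v div c} \<subseteq> {..<q * c}"
    unfolding block_eq_atLeastLessThan[OF assms(1)] by auto
  then have "nbrs (q * c) (block_rel c) v = {j. j div c = v div c} - {v}"
    unfolding nbrs_def block_rel_def by auto
  moreover have "v \<in> {j. j div c = v div c}" by simp
  ultimately show ?thesis
    unfolding block_eq_atLeastLessThan[OF assms(1)] by (simp add: card_Diff_singleton)
qed

text \<open>Label the cliques by their index and the vertices of \<open>S\<close> by \<open>q\<close>; every edge then joins
  equally labelled vertices.\<close>
lemma no_copy_in_cliques_sum:
  assumes "simple_graph W F" "connected_graph W F" "0 < c" "c < card W" "symp S"
    and "b < card W \<or> (\<forall>u<b. card (nbrs b S u) < max_degree W F)"
  shows "\<not> contains_copy {0..<q * c + b}
           (rel_graph (q * c + b) (sum_rel (q * c) (block_rel c) S)) W F"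
proof -
  define R where "R = sum_rel (q * c) (block_rel c) S"
  define label where "label i = (if i < q * c then i div c else q)" for i
  have lab_low: "label i \<noteq> q" if "i < q * c" for i
    using that less_mult_imp_div_less[of i q c] by (simp add: label_def)
  have edges: "label x = label y" if "e \<in> rel_graph (q * c + b) R" "x \<in> e" "y \<in> e" for e x y
    using that unfolding rel_graph_def R_def sum_rel_def block_rel_def label_def by auto
  have classes: "card {u\<in>{0..<q * c + b}. label u = label v} < card W
                   \<or> degree (rel_graph (q * c + b) R) v < max_degree W F"
    if v: "v \<in> {0..<q * c + b}" for v
  proof (cases "v < q * c")
    case True
    then have "{u\<in>{0..<q * c + b}. label u = label v} \<subseteq> {j. j div c = v div c}"
      using lab_low unfolding label_def by (auto split: if_splits)
    then have "card {u\<in>{0..<q * c + b}. label u = label v} \<le> card {j. j div c = v div c}"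
      unfolding block_eq_atLeastLessThan[OF assms(3)] by (intro card_mono) auto
    then have "card {u\<in>{0..<q * c + b}. label u = label v} \<le> c"
      unfolding block_eq_atLeastLessThan[OF assms(3)] by simp
    then show ?thesis using assms(4) by simp
  next
    case False
    define u where "u = v - q * c"
    have u: "v = q * c + u" "u < b" using v False unfolding u_def by auto
    have "{u\<in>{0..<q * c + b}. label u = label v} = {q * c..<q * c + b}"
      using False lab_low unfolding label_def by auto
    moreover have "degree (rel_graph (q * c + b) R) v = card (nbrs b S u)"
      unfolding R_def using u degree_rel_graph[OF symp_sum_rel[OF symp_block_rel assms(5)]]
      by (simp add: nbrs_sum_rel_high card_image)
    ultimately show ?thesis using assms(6) u by auto
  qed
  show ?thesis
    unfolding R_def[symmetric]
    by (rule no_copy_if_small_class_or_low_degree[OF assms(1,2) finite_atLeastLessThan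
          simple_graph_finite_edges[OF simple_graph_rel_graph] edges classes])
qed

lemma ex_num_ge_cliques_sum:
  assumes "simple_graph W F" "connected_graph W F" "0 < c" "c < card W" "symp S"
    and "b < card W \<or> (\<forall>u<b. card (nbrs b S u) < max_degree W F)"
  shows "q * c * (c - 1) + (\<Sum>u<b. card (nbrs b S u)) \<le> 2 * ex_num (q * c + b) W F"
proof -
  define R where "R = sum_rel (q * c) (block_rel c) S"
  have "2 * card (rel_graph (q * c + b) R) = q * c * (c - 1) + (\<Sum>u<b. card (nbrs b S u))"
    unfolding R_def twice_card_rel_graph[OF symp_sum_rel[OF symp_block_rel assms(5)]]
      sum_card_nbrs_sum_rel using card_nbrs_block_rel[OF assms(3)] by simp
  moreover have "card (rel_graph (q * c + b) R) \<le> ex_num (q * c + b) W F"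
    unfolding R_def
    by (rule card_le_ex_num[OF simple_graph_rel_graph no_copy_in_cliques_sum[OF assms]])
  ultimately show ?thesis by linarith
qed

section \<open>An almost regular circulant graph\<close>

definition circ_offsets :: "nat \<Rightarrow> nat \<Rightarrow> nat set" where
  "circ_offsets m t = {1..t} \<union> {m - t..<m}"

text \<open>The circulant graph on \<open>\<int>/m\<close> joining vertices at cyclic distance at most \<open>t\<close>, together with
  the matching \<open>u \<leftrightarrow> u + h\<close> for \<open>u < h\<close> (empty for \<open>h = 0\<close>).\<close>
definition circ_rel :: "nat \<Rightarrow> nat \<Rightarrow> nat \<Rightarrow> nat \<Rightarrow> nat \<Rightarrow> bool" where
  "circ_rel m t h u w \<longleftrightarrow> u < m \<and> w < m \<and>
     ((w + m - u) mod m \<in> circ_offsets m t \<or> (u < h \<and> w = u + h) \<or> (w < h \<and> u = w + h))"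

lemma card_circ_offsets:
  assumes "2 * t < m"
  shows "card (circ_offsets m t) = 2 * t"
proof -
  have "{1..t} \<inter> {m - t..<m} = {}" using assms by auto
  then show ?thesis using assms by (simp add: circ_offsets_def card_Un_disjoint)
qed

lemma cyclic_diff_eq:
  fixes u w m :: nat
  assumes "u < m" "w < m"
  shows "(w + m - u) mod m = (if u \<le> w then w - u else w + m - u)"
proof (cases "u \<le> w")
  case True
  then have "w + m - u = (w - u) + m" by simp
  then have "(w + m - u) mod m = (w - u) mod m" by simp
  then show ?thesis using True assms by simp
qed (use assms in simp)

lemma bij_betw_cyclic_diff:
  fixes u m :: nat
  assumes "u < m"
  shows "bij_betw (\<lambda>w. (w + m - u) mod m) {0..<m} {0..<m}"
proof -
  have "inj_on (\<lambda>w. (w + m - u) mod m) {0..<m}"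
  proof (rule inj_onI)
    fix a b assume "a \<in> {0..<m}" "b \<in> {0..<m}" "(a + m - u) mod m = (b + m - u) mod m"
    then show "a = b" using cyclic_diff_eq[OF assms, of a] cyclic_diff_eq[OF assms, of b] assms
      by (auto split: if_splits)
  qed
  moreover have "(\<lambda>w. (w + m - u) mod m) ` {0..<m} \<subseteq> {0..<m}" using assms by auto
  ultimately show ?thesis
    by (simp add: bij_betw_def endo_inj_surj)
qed

lemma card_circ_nbrs:
  fixes u m t :: nat
  assumes "u < m" "2 * t < m"
  shows "card {w. w < m \<and> (w + m - u) mod m \<in> circ_offsets m t} = 2 * t"
proof -
  let ?f = "\<lambda>w. (w + m - u) mod m"
  let ?N = "{w. w < m \<and> ?f w \<in> circ_offsets m t}"
  have bij: "bij_betw ?f {0..<m} {0..<m}" by (rule bij_betw_cyclic_diff[OF assms(1)])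
  have inj: "inj_on ?f ?N"
    by (rule inj_on_subset[OF bij_betw_imp_inj_on[OF bij]]) auto
  have img: "?f ` ?N = circ_offsets m t"
  proof
    show "circ_offsets m t \<subseteq> ?f ` ?N"
    proof
      fix x assume x: "x \<in> circ_offsets m t"
      then have "x < m" using assms(2) unfolding circ_offsets_def by auto
      then have "x \<in> ?f ` {0..<m}" using bij_betw_imp_surj_on[OF bij] by simp
      then obtain w where w: "w < m" "x = ?f w" by auto
      show "x \<in> ?f ` ?N"
      proof (rule image_eqI)
        show "w \<in> ?N" using w x by simp
      qed (rule w(2))
    qed
  qed blast
  have "card ?N = card (?f ` ?N)" by (rule card_image[OF inj, symmetric])
  also have "\<dots> = 2 * t" unfolding img by (rule card_circ_offsets[OF assms(2)])
  finally show ?thesis .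
qed

lemma symp_circ_rel:
  assumes "t < m"
  shows "symp (circ_rel m t h)"
proof (rule sympI)
  fix u w assume uw: "circ_rel m t h u w"
  then have um: "u < m" and wm: "w < m" unfolding circ_rel_def by auto
  have flip: "(u + m - w) mod m \<in> circ_offsets m t" if off: "(w + m - u) mod m \<in> circ_offsets m t"
  proof (cases "u \<le> w")
    case True
    then have d: "(w + m - u) mod m = w - u" using cyclic_diff_eq[OF um wm] by simp
    then have "u \<noteq> w" using off assms unfolding circ_offsets_def by auto
    then have flipped: "(u + m - w) mod m = m - (w - u)"
      using cyclic_diff_eq[OF wm um] True by simp
    have "w - u \<in> circ_offsets m t" using d off by simp
    then have "m - (w - u) \<in> circ_offsets m t"
      using True \<open>u \<noteq> w\<close> assms wm unfolding circ_offsets_def by auto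
    then show ?thesis unfolding flipped .
  next
    case False
    then have d: "(w + m - u) mod m = m - (u - w)" and flipped: "(u + m - w) mod m = u - w"
      using cyclic_diff_eq[OF um wm] cyclic_diff_eq[OF wm um] by auto
    have "m - (u - w) \<in> circ_offsets m t" using d off by simp
    then have "u - w \<in> circ_offsets m t"
      using False assms um unfolding circ_offsets_def by auto
    then show ?thesis unfolding flipped .
  qed
  show "circ_rel m t h w u" using uw flip unfolding circ_rel_def by blast
qed

text \<open>Matching edges have cyclic offset \<open>h\<close> or \<open>m - h\<close>.\<close>
lemma matching_offset_notin_circ_offsets:
  fixes u w m t h :: nat
  assumes "u < m" "w < m" "t < h" "h + t < m"
    and "(u < h \<and> w = u + h) \<or> (w < h \<and> u = w + h)"
  shows "(w + m - u) mod m \<notin> circ_offsets m t"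
  using assms(5)
proof
  assume "u < h \<and> w = u + h"
  then have "(w + m - u) mod m = h" using cyclic_diff_eq[OF assms(1,2)] by simp
  then show ?thesis using assms(3,4) unfolding circ_offsets_def by auto
next
  assume "w < h \<and> u = w + h"
  then have "(w + m - u) mod m = m - h" using cyclic_diff_eq[OF assms(1,2)] assms(3) by auto
  then show ?thesis using assms(3,4) unfolding circ_offsets_def by auto
qed

lemma card_matching_partners:
  fixes u m h :: nat
  assumes "u < m" "2 * h \<le> m"
  shows "card {w. w < m \<and> ((u < h \<and> w = u + h) \<or> (w < h \<and> u = w + h))}
           = (if u < 2 * h then 1 else 0)"
proof -
  have "{w. w < m \<and> ((u < h \<and> w = u + h) \<or> (w < h \<and> u = w + h))}
          = (if u < h then {u + h} else if u < 2 * h then {u - h} else {})"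
    using assms by auto
  then show ?thesis by simp
qed

lemma card_nbrs_circ_rel:
  assumes "u < m" "2 * t < m" "h = 0 \<or> (t < h \<and> h + t < m \<and> 2 * h \<le> m)"
  shows "card (nbrs m (circ_rel m t h) u) = 2 * t + (if u < 2 * h then 1 else 0)"
proof -
  define A where "A = {w. w < m \<and> (w + m - u) mod m \<in> circ_offsets m t}"
  define B where "B = {w. w < m \<and> ((u < h \<and> w = u + h) \<or> (w < h \<and> u = w + h))}"
  have "0 \<notin> circ_offsets m t" using assms(2) unfolding circ_offsets_def by auto
  then have "u \<notin> A" unfolding A_def by simp
  moreover have "u \<notin> B" using assms(3) unfolding B_def by auto
  ultimately have "nbrs m (circ_rel m t h) u = A \<union> B"
    using assms(1) unfolding nbrs_def circ_rel_def A_def B_def by blast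
  moreover have "A \<inter> B = {}"
    using assms(1,3) matching_offset_notin_circ_offsets[OF assms(1)] unfolding A_def B_def by auto
  moreover have "card B = (if u < 2 * h then 1 else 0)"
    using assms(3) card_matching_partners[OF assms(1)] unfolding B_def by auto
  moreover have "finite A" "finite B" unfolding A_def B_def by auto
  ultimately show ?thesis
    using card_circ_nbrs[OF assms(1,2)] by (simp add: A_def card_Un_disjoint)
qed

lemma exists_near_regular_rel:
  fixes d m :: nat
  assumes "d < m"
  shows "\<exists>S. symp S \<and> (\<forall>u<m. card (nbrs m S u) \<le> d)
             \<and> m * d \<le> (\<Sum>u<m. card (nbrs m S u)) + 1"
proof -
  define t where "t = d div 2"
  define h where "h = (if even d then 0 else m div 2)"
  have tm: "2 * t < m" using assms unfolding t_def by linarith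
  have hc: "h = 0 \<or> (t < h \<and> h + t < m \<and> 2 * h \<le> m)"
    using assms unfolding h_def t_def by presburger
  define S where "S = circ_rel m t h"
  have deg: "card (nbrs m S u) = 2 * t + (if u < 2 * h then 1 else 0)" if "u < m" for u
    unfolding S_def by (rule card_nbrs_circ_rel[OF that tm hc])
  have "(\<Sum>u<m. card (nbrs m S u)) = (\<Sum>u<m. 2 * t + (if u < 2 * h then 1 else 0))"
    using deg by simp
  also have "\<dots> = m * (2 * t) + card {u\<in>{..<m}. u < 2 * h}"
    by (simp add: sum.distrib flip: sum.inter_filter)
  also have "{u\<in>{..<m}. u < 2 * h} = {..<2 * h}" using hc by auto
  finally have "(\<Sum>u<m. card (nbrs m S u)) = m * (2 * t) + 2 * h" by simp
  moreover have "m * d \<le> m * (2 * t) + 2 * h + 1"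
  proof (cases "even d")
    case True
    then show ?thesis unfolding t_def by simp
  next
    case False
    then have "d = 2 * t + 1" "m \<le> 2 * h + 1" unfolding t_def h_def by presburger+
    then show ?thesis by simp
  qed
  moreover have "symp S" unfolding S_def using symp_circ_rel tm by simp
  moreover have "card (nbrs m S u) \<le> d" if "u < m" for u
    unfolding deg[OF that] h_def t_def by presburger
  ultimately show ?thesis by auto
qed

section \<open>The two extremal constructions\<close>

text \<open>\<open>q\<close> cliques \<open>K\<^sub>c\<close> and one clique \<open>K\<^sub>r\<close>, all with fewer vertices than the forbidden graph.\<close>
lemma ex_num_ge_cliques:
  assumes "simple_graph W F" "connected_graph W F" "0 < c" "c < card W" "r < card W"
  shows "q * c * (c - 1) + r * (r - 1) \<le> 2 * ex_num (q * c + r) W F"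
proof -
  have "nbrs r (\<lambda>_ _. True) u = {..<r} - {u}" for u unfolding nbrs_def by auto
  then have "(\<Sum>u<r. card (nbrs r (\<lambda>_ _. True) u)) = r * (r - 1)" by simp
  then show ?thesis
    using ex_num_ge_cliques_sum[OF assms(1-4), of "\<lambda>_ _. True" r q] assms(5)
    by (simp add: symp_def)
qed

text \<open>\<open>q\<close> cliques \<open>K\<^sub>c\<close> and a graph on \<open>b\<close> vertices with degrees at most \<open>d\<close>, below the maximum
  degree of the forbidden graph.\<close>
lemma ex_num_ge_cliques_near_regular:
  assumes "simple_graph W F" "connected_graph W F" "0 < c" "c < card W"
    and "d < b" "d < max_degree W F"
  shows "q * c * (c - 1) + b * d \<le> 2 * ex_num (q * c + b) W F + 1"
proof -
  obtain S where S: "symp S" "\<forall>u<b. card (nbrs b S u) \<le> d"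
    and sum: "b * d \<le> (\<Sum>u<b. card (nbrs b S u)) + 1"
    using exists_near_regular_rel[OF assms(5)] by blast
  have "\<forall>u<b. card (nbrs b S u) < max_degree W F" using S(2) assms(6) by fastforce
  then have "q * c * (c - 1) + (\<Sum>u<b. card (nbrs b S u)) \<le> 2 * ex_num (q * c + b) W F"
    using ex_num_ge_cliques_sum[OF assms(1-4) S(1), of b q] by blast
  then show ?thesis using sum by linarith
qed

lemma one_block_bounds_int:
  fixes n k r p :: int
  assumes "10 \<le> n" "0 \<le> r" "r \<le> n - 2" "1 \<le> k" "p = k * (n - 1) + r"
    and cliques: "k * (n - 1) * (n - 2) + r * (r - 1) \<le> p * (n - 4)"
    and near_regular: "(k - 1) * (n - 1) * (n - 2) + (n - 1 + r) * (n - 5) \<le> p * (n - 4) + 1"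
  shows "k = 1 \<and> 2 * p \<le> r * (n - 1 - r) \<and> p \<le> 2 * n - 7"
proof -
  have small_p: "2 * p \<le> r * (n - 1 - r)"
  proof -
    have "p * (n - 4) - (k * (n - 1) * (n - 2) + r * (r - 1)) = r * (n - 1 - r) - 2 * p"
      unfolding assms(5) by (simp add: algebra_simps)
    then show ?thesis using cliques by linarith
  qed
  have "p * (n - 4) + 1 - ((k - 1) * (n - 1) * (n - 2) + (n - 1 + r) * (n - 5))
          = n + r - 2 * ((k - 1) * (n - 1))"
    unfolding assms(5) by (simp add: algebra_simps)
  then have few_blocks: "2 * ((k - 1) * (n - 1)) \<le> n + r" using near_regular by linarith
  have k: "k = 1"
  proof (rule ccontr)
    assume "k \<noteq> 1"
    then have "n - 1 \<le> (k - 1) * (n - 1)" using assms(1,4) by simp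
    then have "r = n - 2" and "2 * (n - 1) \<le> p"
      using few_blocks assms(1-3,5) by (auto simp: algebra_simps)
    then show False using small_p assms(1) by simp
  qed
  have "p \<le> 2 * n - 7"
  proof (rule ccontr)
    assume "\<not> p \<le> 2 * n - 7"
    then have "n - 1 - r \<in> {1, 2, 3, 4}" using assms(3,5) k by auto
    then show False using small_p assms(1,5) k by (auto simp: algebra_simps)
  qed
  with k small_p show ?thesis by simp
qed

lemma one_block_bounds:
  fixes n k r p :: nat
  assumes "10 \<le> n" "r \<le> n - 2" "1 \<le> k" "p = k * (n - 1) + r"
    and cliques: "k * (n - 1) * (n - 2) + r * (r - 1) \<le> p * (n - 4)"
    and near_regular: "(k - 1) * (n - 1) * (n - 2) + (n - 1 + r) * (n - 5) \<le> p * (n - 4) + 1"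
  shows "k = 1 \<and> 2 * p \<le> r * (n - 1 - r) \<and> p \<le> 2 * n - 7"
proof -
  have e1: "int (k * (n - 1) * (n - 2)) = int k * (int n - 1) * (int n - 2)"
    and e2: "int ((k - 1) * (n - 1) * (n - 2)) = (int k - 1) * (int n - 1) * (int n - 2)"
    and e3: "int ((n - 1 + r) * (n - 5)) = (int n - 1 + int r) * (int n - 5)"
    and e4: "int (p * (n - 4)) = int p * (int n - 4)"
    and e5: "int (r * (n - 1 - r)) = int r * (int n - 1 - int r)"
    using assms(1-3) by (simp_all add: of_nat_diff)
  have e6: "int (r * (r - 1)) = int r * (int r - 1)"
    by (cases r) (simp_all add: algebra_simps)
  have cliques_int: "int k * (int n - 1) * (int n - 2) + int r * (int r - 1) \<le> int p * (int n - 4)"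
    using cliques e1 e4 e6 by linarith
  have near_regular_int: "(int k - 1) * (int n - 1) * (int n - 2) + (int n - 1 + int r) * (int n - 5)
                   \<le> int p * (int n - 4) + 1"
    using near_regular e2 e3 e4 by linarith
  have p_int: "int p = int k * (int n - 1) + int r" using assms(1,4) by (simp add: of_nat_diff)
  have "int k = 1 \<and> 2 * int p \<le> int r * (int n - 1 - int r) \<and> int p \<le> 2 * int n - 7"
    by (rule one_block_bounds_int[OF _ _ _ _ p_int cliques_int near_regular_int])
      (use assms(1-3) in simp_all)
  then show ?thesis using e5 by linarith
qed

lemma real_bounds_of_single_block:
  fixes n r p :: nat
  assumes "2 \<le> n" "r \<le> n - 2" "p = n - 1 + r" "2 * p \<le> r * (n - 1 - r)"
  shows "real p \<le> min ((3 * (real n - 1 + real r) + ((-1) ^ n + (-1) ^ r) / 2) / 2)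
                         (real r * (real n - 1 - real r) / 2)"
proof -
  have p: "real p = real n - 1 + real r" using assms(1,3) by (simp add: of_nat_diff)
  have "(-1::real) ^ n \<ge> -1" "(-1::real) ^ r \<ge> -1" by (simp_all add: minus_one_power_iff)
  then have "2 * real p \<le> 3 * (real n - 1 + real r) + ((-1) ^ n + (-1) ^ r) / 2"
    using p assms(1) by (simp add: field_simps)
  moreover have "real (2 * p) \<le> real (r * (n - 1 - r))" using assms(4) by linarith
  then have "2 * real p \<le> real r * (real n - 1 - real r)"
    using assms(1,2) by (simp add: of_nat_diff diff_diff_eq)
  ultimately show ?thesis by simp
qed

theorem lemma2p3:
  fixes p n k r :: nat
    and W :: "'b set" and F :: "'b set set"
    and V :: "'a set" and E :: "'a set set"
  assumes "n \<ge> 10" and "p \<ge> n"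
    and "p = k * (n - 1) + r" and "r \<le> n - 2"
    and "is_tree W F" and "card W = n" and "max_degree W F = n - 4"
    and "in_Ex p W F V E"
    and "connected_graph V E" and "max_degree V E \<le> n - 4"
  shows "real p \<le> min ((3 * (real n - 1 + real r) + ((-1) ^ n + (-1) ^ r) / 2) / 2)
                         (real r * (real n - 1 - real r) / 2)
         \<and> p \<le> 2 * n - 7"
proof -
  have T: "simple_graph W F" "connected_graph W F" using assms(5) unfolding is_tree_def by auto
  have k: "1 \<le> k" using assms(1-4) by (cases k) auto
  have ex: "2 * ex_num p W F \<le> p * (n - 4)" by (rule twice_ex_num_le[OF assms(8,10)])
  have n: "0 < n - 1" "n - 1 < card W" "n - 1 - 1 = n - 2" "n - 5 < n - 1 + r"
    "n - 5 < max_degree W F" using assms(1,6,7) by auto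
  have "p = (k - 1) * (n - 1) + (n - 1 + r)" using assms(3) k by (cases k) simp_all
  then have "(k - 1) * (n - 1) * (n - 2) + (n - 1 + r) * (n - 5) \<le> 2 * ex_num p W F + 1"
    using ex_num_ge_cliques_near_regular[OF T n(1,2,4,5), of "k - 1"] unfolding n(3) by simp
  moreover have "k * (n - 1) * (n - 2) + r * (r - 1) \<le> 2 * ex_num p W F"
    using ex_num_ge_cliques[OF T n(1,2), of r k] assms(1,3,4,6) unfolding n(3) by simp
  ultimately have "k * (n - 1) * (n - 2) + r * (r - 1) \<le> p * (n - 4)"
    and "(k - 1) * (n - 1) * (n - 2) + (n - 1 + r) * (n - 5) \<le> p * (n - 4) + 1"
    using ex by linarith+
  then have bounds: "k = 1 \<and> 2 * p \<le> r * (n - 1 - r) \<and> p \<le> 2 * n - 7"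
    by (rule one_block_bounds[OF assms(1,4) k assms(3)])
  then have "p = n - 1 + r" using assms(3) by simp
  then have "real p \<le> min ((3 * (real n - 1 + real r) + ((-1) ^ n + (-1) ^ r) / 2) / 2)
                             (real r * (real n - 1 - real r) / 2)"
    using real_bounds_of_single_block assms(1,4) bounds by simp
  with bounds show ?thesis by blast
qed

end
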